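(* Let $S$ be an infinite supernatural number, $\lambda$ a non-archimedean length function on $\widetilde{\mathbb Z_S}$ that grows fast enough, and $\varphi:\mathbb Z_S\to\mathbb Z_S$, $\varphi(x)=x+1$. For $f\in C_{RD}(\mathbb Z_S)$ we have $\int_{\mathbb Z_S}f\,dx=0$ if and only if there exists $g\in C_{RD}(\mathbb Z_S)$ with $f=g\circ\varphi-g$.
   Context: Odometer $\mathbb Z_S=\varprojlim\mathbb Z/s_m\mathbb Z$ for a scale $(s_m)_{m\ge1}$ (positive integers, $s_m\mid s_{m+1}$, $s_m<s_{m+1}$) with $S=\mathrm{lcm}(s_m)$ infinite; $1=(1,1,\dots)$ generates a dense cyclic subgroup; $dx$ is normalized Haar measure. $\widetilde{\mathbb Z_S}=\{z\in\mathbb C:z^s=1\text{ for some } s\mid S\}$; $\chi_z$ is the character with $\chi_z(1)=z$; $\hat f_z=\int f\chi_{\bar z}\,dx$. A non-archimedean length function is $\lambda:\widetilde{\mathbb Z_S}\to[1,\infty)$ with (i) $\lambda(z)=1$ iff $z=1$; (ii) $\lambda(z_1z_2)\le\max\{\lambda(z_1),\lambda(z_2)\}$; (iii) $\{z:\lambda(z)\le r\}$ finite for all $r\ge1$; it grows fast enough if $\lambda(z)\ge c\,(\mathrm{ord}(z))^\alpha$ for some $\alpha,c>0$ and all $z$. $\|f\|_N=\sum_z|\hat f_z|\lambda(z)^N$ and $C_{RD}(\mathbb Z_S)=\{f\in C(\mathbb Z_S):\|f\|_N<\infty\ \forall N\ge 0\}$. *)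

theory Defs
  imports "HOL-Probability.Probability"
begin

text \<open>Points of the odometer Z_S are modelled as compatible sequences of residues
  x m \<in> {0..<s m}, with x m mod s k = x k for k \<le> m, inside the space nat \<Rightarrow> int
  carrying the product topology (subspace topology on Z_S).\<close>

definition is_scale :: "(nat \<Rightarrow> nat) \<Rightarrow> bool" where
  "is_scale s \<longleftrightarrow> (\<forall>m. 0 < s m \<and> s m dvd s (Suc m) \<and> s m < s (Suc m))"

definition odometer :: "(nat \<Rightarrow> nat) \<Rightarrow> (nat \<Rightarrow> int) set" where
  "odometer s = {x. \<forall>m. 0 \<le> x m \<and> x m < int (s m) \<and> (\<forall>k\<le>m. x m mod int (s k) = x k)}"

definition odo_add :: "(nat \<Rightarrow> nat) \<Rightarrow> (nat \<Rightarrow> int) \<Rightarrow> (nat \<Rightarrow> int) \<Rightarrow> (nat \<Rightarrow> int)" where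
  "odo_add s x y = (\<lambda>m. (x m + y m) mod int (s m))"

definition odo_one :: "(nat \<Rightarrow> nat) \<Rightarrow> (nat \<Rightarrow> int)" where
  "odo_one s = (\<lambda>m. 1 mod int (s m))"

definition odo_shift :: "(nat \<Rightarrow> nat) \<Rightarrow> (nat \<Rightarrow> int) \<Rightarrow> (nat \<Rightarrow> int)" where
  "odo_shift s x = odo_add s x (odo_one s)"

text \<open>Normalized Haar measure: a translation-invariant Borel probability measure on Z_S
  (unique, so any such measure is the Haar measure).\<close>
definition is_haar :: "(nat \<Rightarrow> nat) \<Rightarrow> (nat \<Rightarrow> int) measure \<Rightarrow> bool" where
  "is_haar s \<mu> \<longleftrightarrow> prob_space \<mu> \<and> space \<mu> = odometer s
     \<and> sets \<mu> = sets (restrict_space borel (odometer s))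
     \<and> (\<forall>a\<in>odometer s. \<forall>A\<in>sets \<mu>.
           emeasure \<mu> {x\<in>odometer s. odo_add s a x \<in> A} = emeasure \<mu> A)"

text \<open>The dual group: roots of unity of order dividing S, i.e. dividing some s_m.\<close>
definition dual_odo :: "(nat \<Rightarrow> nat) \<Rightarrow> complex set" where
  "dual_odo s = {z. \<exists>m. z ^ s m = 1}"

text \<open>The character chi_z with chi_z(1) = z: chi_z(x) = z^(x_m) for any m with z^(s_m) = 1.\<close>
definition odo_char :: "(nat \<Rightarrow> nat) \<Rightarrow> complex \<Rightarrow> (nat \<Rightarrow> int) \<Rightarrow> complex" where
  "odo_char s z x = z ^ nat (x (LEAST m. z ^ s m = 1))"

definition fourier_coeff ::
  "(nat \<Rightarrow> nat) \<Rightarrow> (nat \<Rightarrow> int) measure \<Rightarrow> ((nat \<Rightarrow> int) \<Rightarrow> complex) \<Rightarrow> complex \<Rightarrow> complex" where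
  "fourier_coeff s \<mu> f z = (\<integral>x. f x * odo_char s (cnj z) x \<partial>\<mu>)"

definition root_order :: "complex \<Rightarrow> nat" where
  "root_order z = (LEAST n. 0 < n \<and> z ^ n = 1)"

definition nonarch_length :: "(nat \<Rightarrow> nat) \<Rightarrow> (complex \<Rightarrow> real) \<Rightarrow> bool" where
  "nonarch_length s l \<longleftrightarrow>
     (\<forall>z\<in>dual_odo s. 1 \<le> l z)
   \<and> (\<forall>z\<in>dual_odo s. l z = 1 \<longleftrightarrow> z = 1)
   \<and> (\<forall>z1\<in>dual_odo s. \<forall>z2\<in>dual_odo s. l (z1 * z2) \<le> max (l z1) (l z2))
   \<and> (\<forall>r\<ge>1. finite {z\<in>dual_odo s. l z \<le> r})"

definition grows_fast_enough :: "(nat \<Rightarrow> nat) \<Rightarrow> (complex \<Rightarrow> real) \<Rightarrow> bool" where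
  "grows_fast_enough s l \<longleftrightarrow>
     (\<exists>\<alpha>>0. \<exists>c>0. \<forall>z\<in>dual_odo s. c * real (root_order z) powr \<alpha> \<le> l z)"

definition C_RD ::
  "(nat \<Rightarrow> nat) \<Rightarrow> (nat \<Rightarrow> int) measure \<Rightarrow> (complex \<Rightarrow> real) \<Rightarrow> ((nat \<Rightarrow> int) \<Rightarrow> complex) set" where
  "C_RD s \<mu> l = {f. continuous_on (odometer s) f \<and>
     (\<forall>N::real\<ge>0. (\<lambda>z. norm (fourier_coeff s \<mu> f z) * l z powr N) summable_on dual_odo s)}"

end

theory Submission
  imports Defs
begin

text \<open>Characters satisfy \<chi>_z(x + 1) = z \<chi>_z(x), so on Fourier series the equation
  g \<circ> \<phi> - g = f becomes (z - 1) g_z = f_z for the coefficients. Since f_1 is the integral of f,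
  which vanishes, g_z = f_z / (z - 1) is the candidate. The small divisors are harmless: a
  root of unity z \<noteq> 1 of order n satisfies |z - 1| \<ge> 1/n, and fast growth of \<lambda> bounds n by a
  fixed power of \<lambda>(z), so dividing by z - 1 costs finitely many of the weights \<lambda>(z)^N and g is
  again of rapid decay. Absolute convergence makes the Fourier series of g continuous with
  the prescribed coefficients, and a continuous function is determined by its coefficients.
  Conversely, the integral of g \<circ> \<phi> - g vanishes by translation invariance of Haar measure.\<close>

section \<open>Roots of unity\<close>

lemma power_mod_eq_if_power_eq_1:
  fixes z :: "'a::monoid_mult"
  assumes "z ^ k = 1"
  shows "z ^ n = z ^ (n mod k)"
proof -
  have "z ^ n = z ^ (k * (n div k) + n mod k)" by simp
  also have "\<dots> = (z ^ k) ^ (n div k) * z ^ (n mod k)" by (simp only: power_add power_mult)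
  finally show ?thesis using assms by simp
qed

lemma norm_power_minus_one_le:
  fixes z :: complex
  assumes "norm z = 1"
  shows "norm (z ^ k - 1) \<le> real k * norm (z - 1)"
proof (induction k)
  case (Suc k)
  have "norm (z ^ Suc k - 1) = norm (z * (z ^ k - 1) + (z - 1))"
    by (rule arg_cong[where f = norm]) (simp add: algebra_simps)
  also have "\<dots> \<le> norm (z ^ k - 1) + norm (z - 1)"
    using norm_triangle_ineq[of "z * (z ^ k - 1)" "z - 1"] assms by (simp add: norm_mult)
  finally show ?case using Suc.IH by (simp add: algebra_simps)
qed simp

lemma norm_root_of_unity:
  fixes z :: complex
  assumes "0 < n" "z ^ n = 1"
  shows "norm z = 1"
proof -
  have "norm z ^ n = 1 ^ n" using assms(2) by (simp flip: norm_power)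
  then show ?thesis by (rule power_eq_imp_eq_base[OF _ norm_ge_zero zero_le_one assms(1)])
qed

text \<open>Some power z^k with k < n lies in the left half plane, because the real parts of
  the powers of z sum to zero; then 1 \<le> |z^k - 1| \<le> k |z - 1|.\<close>
lemma root_of_unity_dist_one:
  fixes z :: complex
  assumes n: "0 < n" and root: "z ^ n = 1" and "z \<noteq> 1"
  shows "1 \<le> real n * norm (z - 1)"
proof -
  have "(\<Sum>k<n. z ^ k) = 0" using root \<open>z \<noteq> 1\<close> by (simp add: sum_gp_strict)
  then have "(\<Sum>k<n. Re (z ^ k)) = 0" by (simp flip: Re_sum)
  then obtain k where k: "k < n" "Re (z ^ k) \<le> 0"
    using sum_pos[of "{..<n}" "\<lambda>k. Re (z ^ k)"] n by fastforce
  have "1 \<le> \<bar>Re (z ^ k - 1)\<bar>" using k(2) by simp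
  also have "\<dots> \<le> norm (z ^ k - 1)" by (rule abs_Re_le_cmod)
  also have "\<dots> \<le> real k * norm (z - 1)"
    by (rule norm_power_minus_one_le[OF norm_root_of_unity[OF n root]])
  also have "\<dots> \<le> real n * norm (z - 1)" using k(1) by (intro mult_right_mono) auto
  finally show ?thesis .
qed

lemma root_order_pos:
  fixes z :: complex
  assumes "0 < k" "z ^ k = 1"
  shows "0 < root_order z"
  using LeastI[of "\<lambda>n. 0 < n \<and> z ^ n = 1" k] assms unfolding root_order_def by auto

lemma power_root_order:
  fixes z :: complex
  assumes "0 < k" "z ^ k = 1"
  shows "z ^ root_order z = 1"
  using LeastI[of "\<lambda>n. 0 < n \<and> z ^ n = 1" k] assms unfolding root_order_def by auto

definition unity_root :: "nat \<Rightarrow> complex" where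
  "unity_root n = exp (2 * of_real pi * \<i> / of_nat n)"

lemma unity_root_power: "unity_root n ^ j = exp (2 * of_real pi * \<i> * of_nat j / of_nat n)"
  unfolding unity_root_def by (simp flip: exp_of_nat_mult add: field_simps)

lemma unity_root_power_root: "0 < n \<Longrightarrow> (unity_root n ^ j) ^ n = 1"
  by (simp add: unity_root_power complex_root_unity)

lemma unity_root_power_eq_iff:
  "0 < n \<Longrightarrow> p < n \<Longrightarrow> q < n \<Longrightarrow> unity_root n ^ p = unity_root n ^ q \<longleftrightarrow> p = q"
  unfolding unity_root_power using complex_root_unity_eq[of n p q] by simp

lemma sum_unity_root_powers:
  assumes "0 < n" "p < n" "q < n"
  shows "(\<Sum>j<n. (unity_root n ^ j) ^ p * inverse ((unity_root n ^ j) ^ q)) = of_bool (p = q) * of_nat n"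
proof -
  define r where "r = unity_root n ^ p / unity_root n ^ q"
  have nz: "unity_root n \<noteq> 0" unfolding unity_root_def by simp
  have "(\<Sum>j<n. (unity_root n ^ j) ^ p * inverse ((unity_root n ^ j) ^ q)) = (\<Sum>j<n. r ^ j)"
    unfolding r_def by (intro sum.cong refl) (simp add: power_divide field_simps flip: power_mult)
  also have "\<dots> = of_bool (p = q) * of_nat n"
  proof (cases "p = q")
    case False
    then have "r \<noteq> 1" unfolding r_def using unity_root_power_eq_iff[OF assms] nz by simp
    moreover have "r ^ n = 1" unfolding r_def
      using unity_root_power_root[OF assms(1), of p] unity_root_power_root[OF assms(1), of q]
      by (simp add: power_divide flip: power_mult)
    ultimately show ?thesis using False by (simp add: sum_gp_strict)
  qed (simp add: r_def nz)
  finally show ?thesis .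
qed

text \<open>No continuity of g is needed: int carries the discrete topology.\<close>
lemma continuous_on_coordinate:
  "continuous_on UNIV (\<lambda>x::nat \<Rightarrow> int. g (x m) :: 'b::topological_space)"
  by (rule continuous_on_compose2[of UNIV g UNIV "\<lambda>x. x m"]) auto

lemma open_contains_cylinder:
  fixes A :: "(nat \<Rightarrow> int) set"
  assumes "open A" "x \<in> A"
  obtains m where "\<And>y. (\<forall>k\<le>m. y k = x k) \<Longrightarrow> y \<in> A"
proof -
  have "openin (product_topology (\<lambda>i. euclidean) UNIV) A" using assms(1) unfolding open_fun_def .
  from product_topology_open_contains_basis[OF this assms(2)] obtain X where
    X: "x \<in> (\<Pi>\<^sub>E i\<in>UNIV. X i)" "finite {i. X i \<noteq> topspace (euclidean :: int topology)}"
       "(\<Pi>\<^sub>E i\<in>UNIV. X i) \<subseteq> A" by blast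
  define m where "m = Max (insert 0 {i. X i \<noteq> UNIV})"
  have "y \<in> A" if y: "\<forall>k\<le>m. y k = x k" for y
  proof -
    have "y i \<in> X i" for i
    proof (cases "X i = UNIV")
      case False
      then have "i \<le> m" unfolding m_def using X(2) by simp
      then show ?thesis using y X(1) by (auto simp: PiE_iff)
    qed simp
    then show ?thesis using X(3) by (auto simp: PiE_iff)
  qed
  then show ?thesis using that by blast
qed

lemma (in prob_space) tendsto_integral_uniform_limit:
  fixes f :: "'i \<Rightarrow> 'a \<Rightarrow> 'b::{banach,second_countable_topology}"
  assumes lim: "uniform_limit (space M) f g F"
    and int_f: "\<forall>\<^sub>F i in F. integrable M (f i)" and int_g: "integrable M g"
  shows "((\<lambda>i. integral\<^sup>L M (f i)) \<longlongrightarrow> integral\<^sup>L M g) F"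
proof (rule tendstoI)
  fix e :: real assume "0 < e"
  then have "\<forall>\<^sub>F i in F. \<forall>x\<in>space M. dist (f i x) (g x) < e / 2"
    using uniform_limitD[OF lim, of "e / 2"] by simp
  with int_f show "\<forall>\<^sub>F i in F. dist (integral\<^sup>L M (f i)) (integral\<^sup>L M g) < e"
  proof eventually_elim
    case (elim i)
    have "dist (integral\<^sup>L M (f i)) (integral\<^sup>L M g) = norm (\<integral>x. f i x - g x \<partial>M)"
      using elim(1) int_g by (simp add: dist_norm)
    also have "\<dots> \<le> (\<integral>x. norm (f i x - g x) \<partial>M)" by (rule integral_norm_bound)
    also have "\<dots> \<le> e / 2"
      using elim int_g by (intro integral_le_const integrable_norm Bochner_Integration.integrable_diff AE_I2)
         (auto simp: dist_norm less_imp_le)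
    finally show ?case using \<open>0 < e\<close> by simp
  qed
qed

definition rapidly_decreasing :: "'a set \<Rightarrow> ('a \<Rightarrow> real) \<Rightarrow> ('a \<Rightarrow> 'b::real_normed_vector) \<Rightarrow> bool" where
  "rapidly_decreasing D l a \<longleftrightarrow> (\<forall>N::real\<ge>0. (\<lambda>z. norm (a z) * l z powr N) summable_on D)"

lemma C_RD_iff:
  "f \<in> C_RD s \<mu> l \<longleftrightarrow>
     continuous_on (odometer s) f \<and> rapidly_decreasing (dual_odo s) l (fourier_coeff s \<mu> f)"
  unfolding C_RD_def rapidly_decreasing_def by simp

lemma rapidly_decreasing_imp_abs_summable:
  assumes "rapidly_decreasing D l a" "\<And>z. z \<in> D \<Longrightarrow> 0 < l z"
  shows "(\<lambda>z. norm (a z)) summable_on D"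
proof -
  have "(\<lambda>z. norm (a z) * l z powr 0) summable_on D"
    using assms(1) unfolding rapidly_decreasing_def by blast
  then show ?thesis by (rule summable_on_cong[THEN iffD1, rotated]) (use assms(2) in force)
qed

lemma rapidly_decreasing_multiplier:
  assumes a: "rapidly_decreasing D l a"
    and b: "\<And>z. z \<in> D \<Longrightarrow> norm (b z) \<le> K * l z powr \<beta> * norm (a z)"
    and "0 \<le> \<beta>" "\<And>z. z \<in> D \<Longrightarrow> 0 < l z"
  shows "rapidly_decreasing D l b"
  unfolding rapidly_decreasing_def
proof (intro allI impI)
  fix N :: real assume "0 \<le> N"
  show "(\<lambda>z. norm (b z) * l z powr N) summable_on D"
  proof (rule summable_on_comparison_test)
    show "(\<lambda>z. K * (norm (a z) * l z powr (N + \<beta>))) summable_on D"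
      using \<open>0 \<le> N\<close> \<open>0 \<le> \<beta>\<close>
      by (intro summable_on_cmult_right a[unfolded rapidly_decreasing_def, rule_format]) simp
    fix z assume z: "z \<in> D"
    have "norm (b z) * l z powr N \<le> K * l z powr \<beta> * norm (a z) * l z powr N"
      by (rule mult_right_mono[OF b[OF z]]) simp
    also have "\<dots> = K * (norm (a z) * l z powr (N + \<beta>))"
      by (simp add: powr_add algebra_simps)
    finally show "norm (b z) * l z powr N \<le> K * (norm (a z) * l z powr (N + \<beta>))" .
  qed simp
qed

section \<open>The odometer and its characters\<close>

locale odometer_scale =
  fixes s :: "nat \<Rightarrow> nat"
  assumes is_scale: "is_scale s"
begin

lemma scale_pos: "0 < s m"
  using is_scale unfolding is_scale_def by auto

lemma scale_dvd:
  assumes "k \<le> m"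
  shows "s k dvd s m"
  using assms
proof (induction rule: dec_induct)
  case (step m)
  then show ?case using is_scale unfolding is_scale_def by (blast intro: dvd_trans)
qed simp

lemma odometerD:
  assumes "x \<in> odometer s"
  shows "0 \<le> x m" "x m < int (s m)" "k \<le> m \<Longrightarrow> x m mod int (s k) = x k"
  using assms unfolding odometer_def by auto

lemma odometer_eq_on_prefix:
  assumes "x \<in> odometer s" "y \<in> odometer s" "y m = x m" "k \<le> m"
  shows "y k = x k"
  using odometerD(3)[OF assms(1,4)] odometerD(3)[OF assms(2,4)] assms(3) by simp

lemma odo_add_in_odometer:
  assumes x: "x \<in> odometer s" and y: "y \<in> odometer s"
  shows "odo_add s x y \<in> odometer s"
proof -
  have "((x m + y m) mod int (s m)) mod int (s k) = (x k + y k) mod int (s k)" if "k \<le> m" for k m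
  proof -
    have "((x m + y m) mod int (s m)) mod int (s k) = (x m + y m) mod int (s k)"
      using scale_dvd[OF that] by (simp add: mod_mod_cancel)
    also have "\<dots> = (x m mod int (s k) + y m mod int (s k)) mod int (s k)"
      by (simp add: mod_add_eq)
    finally show ?thesis using odometerD(3)[OF x that] odometerD(3)[OF y that] by simp
  qed
  then show ?thesis using scale_pos unfolding odometer_def odo_add_def by auto
qed

lemma odo_one_in_odometer: "odo_one s \<in> odometer s"
proof -
  have "(1 mod int (s m)) mod int (s k) = 1 mod int (s k)" if "k \<le> m" for k m
    using scale_dvd[OF that] by (simp add: mod_mod_cancel)
  then show ?thesis using scale_pos unfolding odometer_def odo_one_def by auto
qed

lemma odo_shift_eq: "odo_shift s x = odo_add s (odo_one s) x"
  unfolding odo_shift_def odo_add_def by (simp add: add.commute)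

lemma odo_shift_in_odometer: "x \<in> odometer s \<Longrightarrow> odo_shift s x \<in> odometer s"
  unfolding odo_shift_eq by (rule odo_add_in_odometer[OF odo_one_in_odometer])

lemma odo_shift_nth:
  assumes "x \<in> odometer s"
  shows "nat (odo_shift s x m) = Suc (nat (x m)) mod s m"
proof -
  have "odo_shift s x m = (x m + 1) mod int (s m)"
    unfolding odo_shift_def odo_add_def odo_one_def by (simp add: mod_add_right_eq)
  then show ?thesis using odometerD(1)[OF assms, of m] by (simp add: nat_mod_distrib nat_add_distrib)
qed

lemma dual_odo_power_mono:
  fixes z :: complex
  assumes "z ^ s m = 1" "m \<le> m'"
  shows "z ^ s m' = 1"
proof -
  obtain q where q: "s m' = s m * q" using scale_dvd[OF assms(2)] by auto
  have "z ^ s m' = (z ^ s m) ^ q" unfolding q power_mult ..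
  then show ?thesis using assms(1) by simp
qed

lemma dual_odoE:
  assumes "z \<in> dual_odo s"
  obtains m where "z ^ s m = 1"
  using assms unfolding dual_odo_def by auto

lemma norm_dual_odo: "z \<in> dual_odo s \<Longrightarrow> norm z = 1"
  by (erule dual_odoE) (rule norm_root_of_unity[OF scale_pos])

lemma cnj_dual_odo:
  assumes "z \<in> dual_odo s"
  shows "cnj z \<in> dual_odo s"
proof -
  obtain m where "z ^ s m = 1" using assms by (rule dual_odoE)
  then have "cnj z ^ s m = 1" by (simp flip: complex_cnj_power)
  then show ?thesis unfolding dual_odo_def by blast
qed

lemma mult_dual_odo:
  assumes "z \<in> dual_odo s" "w \<in> dual_odo s"
  shows "z * w \<in> dual_odo s"
proof -
  obtain m m' where "z ^ s m = 1" "w ^ s m' = 1" using assms by (auto elim!: dual_odoE)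
  then have "z ^ s (max m m') = 1" "w ^ s (max m m') = 1" by (auto intro: dual_odo_power_mono)
  then have "(z * w) ^ s (max m m') = 1" by (simp add: power_mult_distrib)
  then show ?thesis unfolding dual_odo_def by blast
qed

lemma odo_char_eq:
  assumes "z ^ s m = 1" "x \<in> odometer s"
  shows "odo_char s z x = z ^ nat (x m)"
proof -
  define m0 where "m0 = (LEAST m. z ^ s m = 1)"
  have m0: "z ^ s m0 = 1" "m0 \<le> m"
    using assms(1) unfolding m0_def
    by (rule LeastI[of "\<lambda>m. z ^ s m = 1"], rule Least_le[of "\<lambda>m. z ^ s m = 1"])
  have "nat (x m) mod s m0 = nat (x m mod int (s m0))"
    using odometerD(1)[OF assms(2)] by (simp add: nat_mod_distrib)
  also have "\<dots> = nat (x m0)" using odometerD(3)[OF assms(2) m0(2)] by simp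
  finally have "z ^ nat (x m) = z ^ nat (x m0)"
    using power_mod_eq_if_power_eq_1[OF m0(1), of "nat (x m)"] by simp
  then show ?thesis unfolding odo_char_def m0_def by simp
qed

lemma norm_odo_char: "z \<in> dual_odo s \<Longrightarrow> norm (odo_char s z x) = 1"
  unfolding odo_char_def by (simp add: norm_power norm_dual_odo)

lemma odo_char_one: "x \<in> odometer s \<Longrightarrow> odo_char s 1 x = 1"
  using odo_char_eq[of 1 0 x] by simp

lemma odo_char_mult:
  assumes "z \<in> dual_odo s" "w \<in> dual_odo s" "x \<in> odometer s"
  shows "odo_char s z x * odo_char s w x = odo_char s (z * w) x"
proof -
  obtain m m' where "z ^ s m = 1" "w ^ s m' = 1" using assms by (auto elim!: dual_odoE)
  then have z: "z ^ s (max m m') = 1" and w: "w ^ s (max m m') = 1"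
    by (auto intro: dual_odo_power_mono)
  then have "(z * w) ^ s (max m m') = 1" by (simp add: power_mult_distrib)
  then show ?thesis
    using odo_char_eq[OF z assms(3)] odo_char_eq[OF w assms(3)] odo_char_eq[OF _ assms(3)]
    by (simp add: power_mult_distrib)
qed

lemma odo_char_shift:
  assumes "z \<in> dual_odo s" "x \<in> odometer s"
  shows "odo_char s z (odo_shift s x) = z * odo_char s z x"
proof -
  obtain m where m: "z ^ s m = 1" using assms(1) by (rule dual_odoE)
  have "odo_char s z (odo_shift s x) = z ^ (Suc (nat (x m)) mod s m)"
    using odo_char_eq[OF m odo_shift_in_odometer[OF assms(2)]] odo_shift_nth[OF assms(2)] by simp
  also have "\<dots> = z * odo_char s z x"
    using power_mod_eq_if_power_eq_1[OF m] odo_char_eq[OF m assms(2)] by simp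
  finally show ?thesis .
qed

lemma compact_odometer: "compact (odometer s)"
proof -
  define P where "P = (\<Pi>\<^sub>E m\<in>(UNIV::nat set). {0..<int (s m)})"
  define C where
    "C = (\<Inter>(m, k)\<in>{(m, k). k \<le> m}. {x::nat \<Rightarrow> int. x m mod int (s k) = x k})"
  have "compactin (product_topology (\<lambda>i. euclidean) UNIV) P"
    unfolding P_def compactin_PiE by (auto intro: finite_imp_compact)
  then have "compact P" unfolding euclidean_product_topology by simp
  have "closed {x::nat \<Rightarrow> int. x m mod int (s k) = x k}" for m k
    by (intro closed_Collect_eq continuous_on_coordinate[of "\<lambda>t. t mod int (s k)" m]
        continuous_on_coordinate[of "\<lambda>t. t" k])
  then have "closed C" unfolding C_def by (auto intro: closed_INT)
  moreover note \<open>compact P\<close>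
  moreover have "odometer s = C \<inter> P"
    unfolding odometer_def C_def P_def by (auto simp: PiE_iff)
  ultimately show ?thesis by auto
qed

lemma continuous_on_odometerE:
  fixes h :: "(nat \<Rightarrow> int) \<Rightarrow> 'b::metric_space"
  assumes "continuous_on (odometer s) h" "x \<in> odometer s" "0 < e"
  obtains m where "\<And>y. y \<in> odometer s \<Longrightarrow> y m = x m \<Longrightarrow> dist (h y) (h x) < e"
proof -
  obtain A where A: "open A" "x \<in> A" "\<forall>y\<in>odometer s. y \<in> A \<longrightarrow> h y \<in> ball (h x) e"
    using assms unfolding continuous_on_topological by (metis centre_in_ball open_ball)
  obtain m where m: "\<And>y. (\<forall>k\<le>m. y k = x k) \<Longrightarrow> y \<in> A"
    using open_contains_cylinder[OF A(1,2)] by blast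
  have "dist (h y) (h x) < e" if "y \<in> odometer s" "y m = x m" for y
  proof -
    have "y \<in> A" using m odometer_eq_on_prefix[OF assms(2) that] by blast
    then show ?thesis using A(3) that(1) by (metis dist_commute mem_ball)
  qed
  then show ?thesis by (rule that)
qed

lemma continuous_on_odo_char: "continuous_on A (odo_char s z)"
  unfolding odo_char_def by (rule continuous_on_subset[OF continuous_on_coordinate]) simp

lemma continuous_on_odo_add: "continuous_on A (odo_add s a)"
proof -
  have "continuous_on UNIV (odo_add s a)"
    unfolding odo_add_def
    by (intro continuous_on_coordinatewise_then_product
        continuous_on_coordinate[of "\<lambda>t. (a _ + t) mod int (s _)"])
  then show ?thesis by (rule continuous_on_subset) simp
qed

lemma unity_root_power_dual_odo: "unity_root (s m) ^ j \<in> dual_odo s"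
  unfolding dual_odo_def using unity_root_power_root[OF scale_pos] by blast

lemma cylinder_indicator_expansion:
  assumes "y \<in> odometer s" "0 \<le> a" "a < int (s m)"
  shows "(of_bool (y m = a) :: complex) =
    (\<Sum>j<s m. inverse ((unity_root (s m) ^ j) ^ nat a) * odo_char s (unity_root (s m) ^ j) y)
      / of_nat (s m)"
proof -
  have "(\<Sum>j<s m. inverse ((unity_root (s m) ^ j) ^ nat a) * odo_char s (unity_root (s m) ^ j) y)
      = (\<Sum>j<s m. (unity_root (s m) ^ j) ^ nat (y m) * inverse ((unity_root (s m) ^ j) ^ nat a))"
    by (intro sum.cong refl)
       (simp add: odo_char_eq[OF unity_root_power_root[OF scale_pos] assms(1)])
  also have "\<dots> = of_bool (nat (y m) = nat a) * of_nat (s m)"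
    using odometerD[OF assms(1), of m] assms(2,3) by (intro sum_unity_root_powers[OF scale_pos]) auto
  finally show ?thesis using odometerD(1)[OF assms(1), of m] assms(2) scale_pos[of m] by auto
qed

end

section \<open>Haar measure and Fourier coefficients\<close>

locale odometer_haar = odometer_scale +
  fixes \<mu> :: "(nat \<Rightarrow> int) measure"
  assumes is_haar: "is_haar s \<mu>"
begin

sublocale prob_space \<mu>
  using is_haar unfolding is_haar_def by auto

lemma space_haar: "space \<mu> = odometer s"
  using is_haar unfolding is_haar_def by auto

lemma sets_haar: "sets \<mu> = sets (restrict_space borel (odometer s))"
  using is_haar unfolding is_haar_def by auto

lemma borel_measurable_continuous_on:
  "continuous_on (odometer s) h \<Longrightarrow> h \<in> borel_measurable \<mu>"
  using borel_measurable_continuous_on_restrict measurable_cong_sets[OF sets_haar refl] by blast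

lemma integrable_continuous_on:
  fixes h :: "(nat \<Rightarrow> int) \<Rightarrow> 'b::{banach,second_countable_topology}"
  assumes "continuous_on (odometer s) h"
  shows "integrable \<mu> h"
proof -
  have "bounded (h ` odometer s)"
    by (intro compact_imp_bounded compact_continuous_image[OF assms compact_odometer])
  then obtain B where "\<forall>x\<in>odometer s. norm (h x) \<le> B" unfolding bounded_iff by auto
  then show ?thesis
    by (intro integrable_const_bound[of _ B] borel_measurable_continuous_on[OF assms] AE_I2)
       (simp add: space_haar)
qed

lemma measurable_odo_add:
  assumes "a \<in> odometer s"
  shows "odo_add s a \<in> measurable \<mu> \<mu>"
proof -
  have "odo_add s a \<in> measurable (restrict_space borel (odometer s)) (restrict_space borel (odometer s))"
    by (rule measurable_restrict_space2)
      (use odo_add_in_odometer[OF assms] borel_measurable_continuous_on_restrict[OF continuous_on_odo_add]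
        in \<open>auto simp: space_restrict_space\<close>)
  then show ?thesis using measurable_cong_sets[OF sets_haar sets_haar] by blast
qed

lemma distr_odo_add:
  assumes "a \<in> odometer s"
  shows "distr \<mu> \<mu> (odo_add s a) = \<mu>"
proof (rule measure_eqI)
  fix A assume "A \<in> sets (distr \<mu> \<mu> (odo_add s a))"
  then have A: "A \<in> sets \<mu>" by simp
  have "odo_add s a -` A \<inter> space \<mu> = {x\<in>odometer s. odo_add s a x \<in> A}" by (auto simp: space_haar)
  then show "emeasure (distr \<mu> \<mu> (odo_add s a)) A = emeasure \<mu> A"
    using emeasure_distr[OF measurable_odo_add[OF assms] A] is_haar assms A
    unfolding is_haar_def by simp
qed simp

lemma integral_odo_shift:
  fixes h :: "(nat \<Rightarrow> int) \<Rightarrow> 'b::{banach,second_countable_topology}"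
  assumes "h \<in> borel_measurable \<mu>"
  shows "(\<integral>x. h (odo_shift s x) \<partial>\<mu>) = (\<integral>x. h x \<partial>\<mu>)"
  using integral_distr[OF measurable_odo_add[OF odo_one_in_odometer], of h]
    distr_odo_add[OF odo_one_in_odometer] assms
  by (simp add: odo_shift_eq)

lemma integral_odo_char:
  assumes "z \<in> dual_odo s"
  shows "(\<integral>x. odo_char s z x \<partial>\<mu>) = of_bool (z = 1)"
proof (cases "z = 1")
  case True
  then have "(\<integral>x. odo_char s z x \<partial>\<mu>) = (\<integral>x. 1 \<partial>\<mu>)"
    by (intro Bochner_Integration.integral_cong) (auto simp: odo_char_one space_haar)
  then show ?thesis using True prob_space by simp
next
  case False
  have "(\<integral>x. odo_char s z x \<partial>\<mu>) = (\<integral>x. odo_char s z (odo_shift s x) \<partial>\<mu>)"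
    by (intro integral_odo_shift[symmetric] borel_measurable_continuous_on continuous_on_odo_char)
  also have "\<dots> = z * (\<integral>x. odo_char s z x \<partial>\<mu>)"
    by (subst Bochner_Integration.integral_mult_right_zero[symmetric],
        rule Bochner_Integration.integral_cong)
       (auto simp: odo_char_shift[OF assms] space_haar)
  finally have "(1 - z) * (\<integral>x. odo_char s z x \<partial>\<mu>) = 0" by (simp add: algebra_simps)
  then show ?thesis using False by simp
qed

lemma integral_odo_char_mult_cnj:
  assumes z: "z \<in> dual_odo s" and w: "w \<in> dual_odo s"
  shows "(\<integral>x. odo_char s z x * odo_char s (cnj w) x \<partial>\<mu>) = of_bool (z = w)"
proof -
  have "(\<integral>x. odo_char s z x * odo_char s (cnj w) x \<partial>\<mu>) = (\<integral>x. odo_char s (z * cnj w) x \<partial>\<mu>)"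
    by (rule Bochner_Integration.integral_cong) (auto simp: odo_char_mult[OF z cnj_dual_odo[OF w]] space_haar)
  also have "\<dots> = of_bool (z * cnj w = 1)"
    by (intro integral_odo_char mult_dual_odo z cnj_dual_odo w)
  also have "z * cnj w = 1 \<longleftrightarrow> z = w"
  proof
    have wc: "w * cnj w = 1" using norm_dual_odo[OF w] by (simp flip: complex_norm_square)
    assume zw: "z * cnj w = 1"
    have "z = z * (w * cnj w)" using wc by simp
    also have "\<dots> = w * (z * cnj w)" by (simp add: algebra_simps)
    finally show "z = w" using zw by simp
  qed (simp flip: complex_norm_square add: norm_dual_odo[OF w])
  finally show ?thesis .
qed

lemma integral_mult_cylinder_indicator:
  assumes "continuous_on (odometer s) h" "0 \<le> a" "a < int (s m)"
  shows "(\<integral>y. h y * of_bool (y m = a) \<partial>\<mu>) =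
    (\<Sum>j<s m. inverse ((unity_root (s m) ^ j) ^ nat a)
        * (\<integral>y. h y * odo_char s (unity_root (s m) ^ j) y \<partial>\<mu>)) / of_nat (s m)"
proof -
  let ?\<omega> = "unity_root (s m)"
  have "(\<integral>y. h y * of_bool (y m = a) \<partial>\<mu>) =
      (\<integral>y. (\<Sum>j<s m. inverse ((?\<omega> ^ j) ^ nat a) * (h y * odo_char s (?\<omega> ^ j) y)) \<partial>\<mu>)
        / of_nat (s m)"
    by (subst Bochner_Integration.integral_divide_zero[symmetric],
        rule Bochner_Integration.integral_cong[OF refl])
       (simp add: space_haar cylinder_indicator_expansion[OF _ assms(2,3)] sum_distrib_left
          sum_divide_distrib algebra_simps)
  also have "(\<integral>y. (\<Sum>j<s m. inverse ((?\<omega> ^ j) ^ nat a) * (h y * odo_char s (?\<omega> ^ j) y)) \<partial>\<mu>)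
     = (\<Sum>j<s m. inverse ((?\<omega> ^ j) ^ nat a) * (\<integral>y. h y * odo_char s (?\<omega> ^ j) y \<partial>\<mu>))"
    by (subst Bochner_Integration.integral_sum)
       (auto intro!: integrable_continuous_on continuous_intros assms(1) continuous_on_odo_char)
  finally show ?thesis .
qed

lemma integral_cylinder_indicator:
  assumes "0 \<le> a" "a < int (s m)"
  shows "(\<integral>y. of_bool (y m = a) \<partial>\<mu>) = 1 / real (s m)"
proof -
  let ?\<omega> = "unity_root (s m)"
  have "complex_of_real (\<integral>y. of_bool (y m = a) \<partial>\<mu>) = (\<integral>y. 1 * of_bool (y m = a) \<partial>\<mu>)"
    unfolding integral_complex_of_real[symmetric] by (rule Bochner_Integration.integral_cong) auto
  also have "\<dots> = (\<Sum>j<s m. inverse ((?\<omega> ^ j) ^ nat a) * (\<integral>y. 1 * odo_char s (?\<omega> ^ j) y \<partial>\<mu>))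
      / of_nat (s m)"
    by (rule integral_mult_cylinder_indicator) (use assms in auto)
  also have "(\<Sum>j<s m. inverse ((?\<omega> ^ j) ^ nat a) * (\<integral>y. 1 * odo_char s (?\<omega> ^ j) y \<partial>\<mu>))
      = (\<Sum>j<s m. of_bool (j = 0))"
  proof (intro sum.cong refl)
    fix j assume "j \<in> {..<s m}"
    then have "?\<omega> ^ j = 1 \<longleftrightarrow> j = 0"
      using unity_root_power_eq_iff[OF scale_pos[of m], of j 0] scale_pos[of m] by auto
    then show "inverse ((?\<omega> ^ j) ^ nat a) * (\<integral>y. 1 * odo_char s (?\<omega> ^ j) y \<partial>\<mu>) = of_bool (j = 0)"
      using integral_odo_char[OF unity_root_power_dual_odo, of m j] by auto
  qed
  also have "\<dots> = 1" using scale_pos[of m] by simp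
  finally have "complex_of_real (\<integral>y. of_bool (y m = a) \<partial>\<mu>) = complex_of_real (1 / real (s m))"
    by simp
  then show ?thesis by (simp only: of_real_eq_iff)
qed

lemma fourier_coeff_diff:
  assumes "continuous_on (odometer s) f" "continuous_on (odometer s) g"
  shows "fourier_coeff s \<mu> (\<lambda>x. f x - g x) z = fourier_coeff s \<mu> f z - fourier_coeff s \<mu> g z"
  unfolding fourier_coeff_def left_diff_distrib
  by (intro Bochner_Integration.integral_diff integrable_continuous_on continuous_intros assms
      continuous_on_odo_char)

text \<open>Average h over a small cylinder around x: the average vanishes because the cylinder's
  indicator is a trigonometric polynomial, and it is close to h x by continuity.\<close>
lemma fourier_coeff_eq_0_imp_eq_0:
  assumes h: "continuous_on (odometer s) h"
    and coeff: "\<And>w. w \<in> dual_odo s \<Longrightarrow> fourier_coeff s \<mu> h w = 0"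
    and x: "x \<in> odometer s"
  shows "h x = 0"
proof -
  have "norm (h x) \<le> e" if "0 < e" for e
  proof -
    obtain m where m: "\<And>y. y \<in> odometer s \<Longrightarrow> y m = x m \<Longrightarrow> dist (h y) (h x) < e"
      using continuous_on_odometerE[OF h x \<open>0 < e\<close>] by blast
    define a where "a = x m"
    have a: "0 \<le> a" "a < int (s m)" using odometerD[OF x] unfolding a_def by auto
    have n: "0 < real (s m)" using scale_pos by simp
    have "(\<integral>y. h y * odo_char s w y \<partial>\<mu>) = 0" if "w \<in> dual_odo s" for w
      using coeff[OF cnj_dual_odo[OF that]] unfolding fourier_coeff_def by simp
    then have avg0: "(\<integral>y. h y * of_bool (y m = a) \<partial>\<mu>) = 0"
      unfolding integral_mult_cylinder_indicator[OF h a] using unity_root_power_dual_odo by simp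
    have "(\<lambda>y. of_bool (y m = a) :: complex) = (\<lambda>y. complex_of_real (of_bool (y m = a)))"
      by (auto simp: of_bool_def)
    then have int_ind: "(\<integral>y. of_bool (y m = a) \<partial>\<mu>) = (1 / of_nat (s m) :: complex)"
      using integral_cylinder_indicator[OF a] by (simp add: integral_complex_of_real)
    have "h x / of_nat (s m) = (\<integral>y. (h x - h y) * of_bool (y m = a) \<partial>\<mu>)"
      using avg0 int_ind unfolding left_diff_distrib
      by (subst Bochner_Integration.integral_diff)
         (auto intro!: integrable_continuous_on continuous_intros h
           continuous_on_subset[OF continuous_on_coordinate])
    also have "norm \<dots> \<le> (\<integral>y. e * of_bool (y m = a) \<partial>\<mu>)"
    proof (rule order_trans[OF Bochner_Integration.integral_norm_bound integral_mono])
      show "integrable \<mu> (\<lambda>y. norm ((h x - h y) * of_bool (y m = a)))"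
        by (intro integrable_norm integrable_continuous_on continuous_intros h
            continuous_on_subset[OF continuous_on_coordinate]) simp
      show "integrable \<mu> (\<lambda>y. e * of_bool (y m = a))"
        by (intro integrable_continuous_on continuous_on_subset[OF continuous_on_coordinate]) simp
      show "norm ((h x - h y) * of_bool (y m = a)) \<le> e * of_bool (y m = a)" if "y \<in> space \<mu>" for y
        using m[of y] that unfolding space_haar a_def by (auto simp: dist_norm norm_minus_commute)
    qed
    also have "\<dots> = e / real (s m)" using integral_cylinder_indicator[OF a] by simp
    finally show ?thesis using n by (simp add: norm_divide divide_le_cancel)
  qed
  then show ?thesis by (metis norm_le_zero_iff field_le_epsilon add_0)
qed

end

section \<open>Absolutely convergent Fourier series\<close>

definition fourier_series :: "(nat \<Rightarrow> nat) \<Rightarrow> (complex \<Rightarrow> complex) \<Rightarrow> (nat \<Rightarrow> int) \<Rightarrow> complex" where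
  "fourier_series s a = (\<lambda>x. \<Sum>\<^sub>\<infinity>z\<in>dual_odo s. a z * odo_char s z x)"

context odometer_scale
begin

lemma norm_fourier_term: "z \<in> dual_odo s \<Longrightarrow> norm (a z * odo_char s z x) = norm (a z)"
  by (simp add: norm_mult norm_odo_char)

lemma summable_on_fourier_terms:
  assumes "(\<lambda>z. norm (a z)) summable_on dual_odo s"
  shows "(\<lambda>z. a z * odo_char s z x) summable_on dual_odo s"
proof (rule abs_summable_summable)
  show "(\<lambda>z. norm (a z * odo_char s z x)) summable_on dual_odo s"
    using assms by (rule summable_on_cong[THEN iffD1, rotated]) (simp add: norm_fourier_term)
qed

lemma uniform_limit_fourier_series:
  assumes "(\<lambda>z. norm (a z)) summable_on dual_odo s"
  shows "uniform_limit (odometer s) (\<lambda>G x. \<Sum>z\<in>G. a z * odo_char s z x) (fourier_series s a)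
           (finite_subsets_at_top (dual_odo s))"
  unfolding fourier_series_def
  by (rule Weierstrass_m_test_general[OF _ assms]) (simp add: norm_fourier_term)

lemma continuous_on_fourier_series:
  assumes "(\<lambda>z. norm (a z)) summable_on dual_odo s"
  shows "continuous_on (odometer s) (fourier_series s a)"
  by (rule uniform_limit_theorem[OF _ uniform_limit_fourier_series[OF assms]])
     (simp_all add: continuous_on_sum continuous_on_mult continuous_on_odo_char)

lemma fourier_series_coboundary:
  assumes b: "(\<lambda>z. norm (b z)) summable_on dual_odo s"
    and c: "(\<lambda>z. norm (c z)) summable_on dual_odo s"
    and bc: "\<And>z. z \<in> dual_odo s \<Longrightarrow> c z = (z - 1) * b z"
    and x: "x \<in> odometer s"
  shows "fourier_series s b (odo_shift s x) - fourier_series s b x = fourier_series s c x"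
proof -
  have "fourier_series s b (odo_shift s x) =
      (\<Sum>\<^sub>\<infinity>z\<in>dual_odo s. b z * odo_char s z x + c z * odo_char s z x)"
    unfolding fourier_series_def
  proof (rule infsum_cong)
    fix z assume z: "z \<in> dual_odo s"
    show "b z * odo_char s z (odo_shift s x) = b z * odo_char s z x + c z * odo_char s z x"
      unfolding bc[OF z] odo_char_shift[OF z x] by (simp add: algebra_simps)
  qed
  also have "\<dots> = fourier_series s b x + fourier_series s c x"
    unfolding fourier_series_def by (intro infsum_add summable_on_fourier_terms b c)
  finally show ?thesis by simp
qed

end

context odometer_haar
begin

lemma fourier_coeff_fourier_series:
  assumes a: "(\<lambda>z. norm (a z)) summable_on dual_odo s" and w: "w \<in> dual_odo s"
  shows "fourier_coeff s \<mu> (fourier_series s a) w = a w"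
proof -
  let ?P = "\<lambda>G x. \<Sum>z\<in>G. a z * odo_char s z x * odo_char s (cnj w) x"
  have "uniform_limit (odometer s) ?P (\<lambda>x. fourier_series s a x * odo_char s (cnj w) x)
      (finite_subsets_at_top (dual_odo s))"
    unfolding fourier_series_def infsum_cmult_left'[symmetric]
    by (rule Weierstrass_m_test_general[OF _ a])
       (simp add: norm_mult norm_odo_char cnj_dual_odo[OF w])
  then have "((\<lambda>G. \<integral>x. ?P G x \<partial>\<mu>) \<longlongrightarrow> fourier_coeff s \<mu> (fourier_series s a) w)
      (finite_subsets_at_top (dual_odo s))"
    unfolding fourier_coeff_def space_haar[symmetric]
    by (intro tendsto_integral_uniform_limit always_eventually allI integrable_continuous_on
        continuous_on_sum continuous_on_mult continuous_on_const continuous_on_odo_char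
        continuous_on_fourier_series[OF a])
  moreover have "\<forall>\<^sub>F G in finite_subsets_at_top (dual_odo s). (\<integral>x. ?P G x \<partial>\<mu>) = a w"
    unfolding eventually_finite_subsets_at_top
  proof (intro exI[of _ "{w}"] conjI allI impI)
    fix G assume G: "finite G \<and> {w} \<subseteq> G \<and> G \<subseteq> dual_odo s"
    have "(\<integral>x. ?P G x \<partial>\<mu>) = (\<Sum>z\<in>G. a z * (\<integral>x. odo_char s z x * odo_char s (cnj w) x \<partial>\<mu>))"
      by (subst Bochner_Integration.integral_sum)
         (simp_all add: mult.assoc integrable_continuous_on continuous_on_mult continuous_on_const
           continuous_on_odo_char)
    also have "\<dots> = (\<Sum>z\<in>G. a z * of_bool (z = w))"
      using G by (intro sum.cong refl) (auto simp: integral_odo_char_mult_cnj[OF _ w])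
    also have "\<dots> = a w" using G by (simp add: sum.delta')
    finally show "(\<integral>x. ?P G x \<partial>\<mu>) = a w" .
  qed (use w in auto)
  then have "((\<lambda>G. \<integral>x. ?P G x \<partial>\<mu>) \<longlongrightarrow> a w) (finite_subsets_at_top (dual_odo s))"
    by (rule tendsto_eventually)
  ultimately show ?thesis by (rule tendsto_unique[OF finite_subsets_at_top_neq_bot])
qed

lemma fourier_inversion:
  assumes f: "continuous_on (odometer s) f"
    and c: "(\<lambda>z. norm (fourier_coeff s \<mu> f z)) summable_on dual_odo s"
    and x: "x \<in> odometer s"
  shows "f x = fourier_series s (fourier_coeff s \<mu> f) x"
proof -
  let ?g = "fourier_series s (fourier_coeff s \<mu> f)"
  have g: "continuous_on (odometer s) ?g" by (rule continuous_on_fourier_series[OF c])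
  have "(\<lambda>y. f y - ?g y) x = 0"
  proof (rule fourier_coeff_eq_0_imp_eq_0[OF _ _ x])
    show "continuous_on (odometer s) (\<lambda>y. f y - ?g y)" by (intro continuous_on_diff f g)
    fix w assume "w \<in> dual_odo s"
    then show "fourier_coeff s \<mu> (\<lambda>y. f y - ?g y) w = 0"
      by (simp only: fourier_coeff_diff[OF f g] fourier_coeff_fourier_series[OF c] diff_self)
  qed
  then show ?thesis by simp
qed

lemma fourier_series_in_C_RD:
  assumes "rapidly_decreasing (dual_odo s) l a" "\<And>z. z \<in> dual_odo s \<Longrightarrow> 0 < l z"
  shows "fourier_series s a \<in> C_RD s \<mu> l"
proof -
  have a: "(\<lambda>z. norm (a z)) summable_on dual_odo s"
    by (rule rapidly_decreasing_imp_abs_summable[OF assms])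
  have "rapidly_decreasing (dual_odo s) l (fourier_coeff s \<mu> (fourier_series s a))"
    unfolding rapidly_decreasing_def
  proof (intro allI impI)
    fix N :: real assume "0 \<le> N"
    with assms(1) have "(\<lambda>z. norm (a z) * l z powr N) summable_on dual_odo s"
      unfolding rapidly_decreasing_def by blast
    then show "(\<lambda>z. norm (fourier_coeff s \<mu> (fourier_series s a) z) * l z powr N) summable_on dual_odo s"
      by (rule summable_on_cong[THEN iffD1, rotated]) (simp add: fourier_coeff_fourier_series[OF a])
  qed
  then show ?thesis unfolding C_RD_iff using continuous_on_fourier_series[OF a] by simp
qed

end

section \<open>Coboundaries\<close>

lemma (in odometer_scale) small_divisor_bound:
  assumes "grows_fast_enough s l"
  obtains K \<beta> where "0 \<le> K" "0 \<le> \<beta>"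
    "\<And>z. z \<in> dual_odo s \<Longrightarrow> inverse (norm (z - 1)) \<le> K * l z powr \<beta>"
proof -
  obtain \<alpha> c where \<alpha>: "0 < \<alpha>" and c: "0 < c"
    and growth: "\<And>z. z \<in> dual_odo s \<Longrightarrow> c * real (root_order z) powr \<alpha> \<le> l z"
    using assms unfolding grows_fast_enough_def by blast
  define K where "K = inverse (c powr (1 / \<alpha>))"
  have "inverse (norm (z - 1)) \<le> K * l z powr (1 / \<alpha>)" if z: "z \<in> dual_odo s" for z
  proof (cases "z = 1")
    case False
    obtain m where "z ^ s m = 1" using z by (rule dual_odoE)
    note ord = root_order_pos[OF scale_pos this] power_root_order[OF scale_pos this]
    define n where "n = real (root_order z)"
    have "1 \<le> n * norm (z - 1)" unfolding n_def by (rule root_of_unity_dist_one[OF ord False])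
    then have "inverse (norm (z - 1)) \<le> n"
      using False by (simp add: inverse_eq_divide pos_divide_le_eq)
    also have "n = (n powr \<alpha>) powr (1 / \<alpha>)"
      using ord(1) \<alpha> unfolding n_def by (simp add: powr_powr)
    also have "\<dots> \<le> (l z / c) powr (1 / \<alpha>)"
      using growth[OF z] \<alpha> c unfolding n_def by (intro powr_mono2) (simp_all add: field_simps)
    also have "\<dots> = K * l z powr (1 / \<alpha>)"
      unfolding K_def powr_divide by (simp add: divide_inverse mult.commute)
    finally show ?thesis .
  qed (simp add: K_def)
  then show ?thesis using that[of K "1 / \<alpha>"] \<alpha> by (simp add: K_def)
qed

context odometer_haar
begin

lemma coboundary_of_integral_eq_0:
  assumes l: "\<And>z. z \<in> dual_odo s \<Longrightarrow> 1 \<le> l z" and growth: "grows_fast_enough s l"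
    and f: "f \<in> C_RD s \<mu> l" and f0: "(\<integral>x. f x \<partial>\<mu>) = 0"
  shows "\<exists>g\<in>C_RD s \<mu> l. \<forall>x\<in>odometer s. f x = g (odo_shift s x) - g x"
proof -
  define c where "c = fourier_coeff s \<mu> f"
  define b where "b z = c z / (z - 1)" for z
  have l0: "\<And>z. z \<in> dual_odo s \<Longrightarrow> 0 < l z" using l by (rule less_le_trans[OF zero_less_one])
  have f_cont: "continuous_on (odometer s) f" and c: "rapidly_decreasing (dual_odo s) l c"
    using f unfolding C_RD_iff c_def by auto
  obtain K \<beta> where K: "0 \<le> K" "0 \<le> \<beta>"
    "\<And>z. z \<in> dual_odo s \<Longrightarrow> inverse (norm (z - 1)) \<le> K * l z powr \<beta>"
    using small_divisor_bound[OF growth] by blast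
  have b: "rapidly_decreasing (dual_odo s) l b"
  proof (rule rapidly_decreasing_multiplier[OF c _ K(2) l0])
    fix z assume "z \<in> dual_odo s"
    then show "norm (b z) \<le> K * l z powr \<beta> * norm (c z)"
      unfolding b_def using mult_right_mono[OF K(3), of z "norm (c z)"]
      by (simp add: norm_mult norm_inverse divide_inverse mult.commute)
  qed
  have "c 1 = (\<integral>x. f x \<partial>\<mu>)"
    unfolding c_def fourier_coeff_def
    by (rule Bochner_Integration.integral_cong) (simp_all add: space_haar odo_char_one)
  then have bc: "c z = (z - 1) * b z" for z
    using f0 unfolding b_def by (cases "z = 1") auto
  have "f x = fourier_series s b (odo_shift s x) - fourier_series s b x" if x: "x \<in> odometer s" for x
    using fourier_inversion[OF f_cont _ x] fourier_series_coboundary[OF _ _ bc x]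
      rapidly_decreasing_imp_abs_summable[OF b l0] rapidly_decreasing_imp_abs_summable[OF c l0]
    unfolding c_def by simp
  then show ?thesis using fourier_series_in_C_RD[OF b l0] by blast
qed

lemma integral_coboundary:
  fixes g :: "(nat \<Rightarrow> int) \<Rightarrow> 'b::{banach,second_countable_topology}"
  assumes g: "continuous_on (odometer s) g"
  shows "(\<integral>x. g (odo_shift s x) - g x \<partial>\<mu>) = 0"
proof -
  have "continuous_on (odometer s) (\<lambda>x. g (odo_shift s x))"
    using odo_shift_in_odometer
    by (intro continuous_on_compose2[OF g]) (auto simp: odo_shift_eq continuous_on_odo_add)
  then show ?thesis
    using integral_odo_shift[OF borel_measurable_continuous_on[OF g]]
    by (simp add: Bochner_Integration.integral_diff integrable_continuous_on g)
qed

end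

theorem mainTheorem9:
  fixes s :: "nat \<Rightarrow> nat" and \<mu> :: "(nat \<Rightarrow> int) measure"
    and l :: "complex \<Rightarrow> real" and f :: "(nat \<Rightarrow> int) \<Rightarrow> complex"
  assumes "is_scale s"
    and "is_haar s \<mu>"
    and "nonarch_length s l"
    and "grows_fast_enough s l"
    and "f \<in> C_RD s \<mu> l"
  shows "(\<integral>x. f x \<partial>\<mu>) = 0 \<longleftrightarrow>
         (\<exists>g\<in>C_RD s \<mu> l. \<forall>x\<in>odometer s. f x = g (odo_shift s x) - g x)"
proof -
  interpret odometer_haar s \<mu> by unfold_locales (fact assms(1), fact assms(2))
  have l: "\<And>z. z \<in> dual_odo s \<Longrightarrow> 1 \<le> l z" using assms(3) unfolding nonarch_length_def by blast
  show ?thesis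
  proof
    assume "(\<integral>x. f x \<partial>\<mu>) = 0"
    then show "\<exists>g\<in>C_RD s \<mu> l. \<forall>x\<in>odometer s. f x = g (odo_shift s x) - g x"
      using coboundary_of_integral_eq_0[OF l assms(4,5)] by blast
  next
    assume "\<exists>g\<in>C_RD s \<mu> l. \<forall>x\<in>odometer s. f x = g (odo_shift s x) - g x"
    then obtain g where g: "g \<in> C_RD s \<mu> l" and fg: "\<forall>x\<in>odometer s. f x = g (odo_shift s x) - g x"
      by blast
    have "(\<integral>x. f x \<partial>\<mu>) = (\<integral>x. g (odo_shift s x) - g x \<partial>\<mu>)"
      by (rule Bochner_Integration.integral_cong) (simp_all add: fg space_haar)
    also have "\<dots> = 0" using g by (simp add: C_RD_iff integral_coboundary)
    finally show "(\<integral>x. f x \<partial>\<mu>) = 0" .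
  qed
qed

end
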